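(* For every integer $n\geq1$, let $f_n(x)=x^n(x-2)-2$ and $g_n(x)=x^n(x-2)+2$. Then $f_n$ and $g_n$ are irreducible in $\mathbb Q[x]$, separable, do not have $0$ as a root, and have no common root. *)

theory Defs
  imports "HOL-Computational_Algebra.Computational_Algebra" Complex_Main
begin

definition f_poly :: "nat \<Rightarrow> rat poly" where
  "f_poly n = monom 1 n * [:-2, 1:] - [:2:]"

definition g_poly :: "nat \<Rightarrow> rat poly" where
  "g_poly n = monom 1 n * [:-2, 1:] + [:2:]"

text \<open>A polynomial over a field is separable iff it is coprime to its formal derivative
  (equivalently, it has no repeated root in an algebraic closure).\<close>
definition separable :: "'a::field poly \<Rightarrow> bool" where
  "separable p \<longleftrightarrow> coprime p (pderiv p)"

end

(*
  Both polynomials are Eisenstein at 2: x^(n+1) - 2 x^n + c with c = -2 or c = 2 is monic, its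
  lower coefficients are even and its constant term is not divisible by 4. Gauss's lemma carries
  irreducibility from Z[x] to Q[x], and irreducible polynomials in characteristic 0 are separable.
  The remaining claims follow from f_n(0) = -2, g_n(0) = 2 and g_n - f_n = 4.
*)
theory Submission imports Defs "Berlekamp_Zassenhaus.Factor_Bound" begin
hide_const (open) UnivPoly.coeff UnivPoly.monom Square_Free_Factorization.separable

lemma prime_elem_not_dvd_coeff_mult:
  fixes A B :: "'a::idom poly"
  assumes p: "prime_elem p" and lc: "\<not> p dvd lead_coeff (A * B)"
    and b0: "\<not> p dvd coeff B 0" and dB: "degree B > 0"
  shows "\<exists>i < degree (A * B). \<not> p dvd coeff (A * B) i"
proof -
  have lcA: "\<not> p dvd lead_coeff A" using lc by (metis dvd_mult2 lead_coeff_mult)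
  have "A \<noteq> 0" "B \<noteq> 0" using lcA dB by auto
  then have deg: "degree (A * B) = degree A + degree B" by (rule degree_mult_eq)
  define k where "k = (LEAST i. \<not> p dvd coeff A i)"
  have ak: "\<not> p dvd coeff A k" unfolding k_def by (rule LeastI) (fact lcA)
  have below: "p dvd coeff A i" if "i < k" for i
    using not_less_Least[OF that[unfolded k_def]] by blast
  have "k \<le> degree A" unfolding k_def by (rule Least_le) (fact lcA)
  with deg dB have "k < degree (A * B)" by simp
  have "coeff (A * B) k = (\<Sum>i<k. coeff A i * coeff B (k - i)) + coeff A k * coeff B 0"
    by (simp add: coeff_mult lessThan_Suc_atMost[symmetric])
  moreover have "p dvd (\<Sum>i<k. coeff A i * coeff B (k - i))"
    using below by (intro dvd_sum) simp
  moreover have "\<not> p dvd coeff A k * coeff B 0"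
    using p ak b0 by (simp add: prime_elem_dvd_mult_iff)
  ultimately have "\<not> p dvd coeff (A * B) k" by (simp add: dvd_add_right_iff)
  with \<open>k < degree (A * B)\<close> show ?thesis by blast
qed

lemma eisenstein_irreducible\<^sub>d:
  fixes F :: "'a::idom poly"
  assumes p: "prime_elem p" and lc: "\<not> p dvd lead_coeff F"
    and coeffs: "\<And>i. i < degree F \<Longrightarrow> p dvd coeff F i"
    and c0: "\<not> p\<^sup>2 dvd coeff F 0" and deg: "degree F > 0"
  shows "irreducible\<^sub>d F"
proof
  show "degree F > 0" by fact
next
  fix A B assume dA: "degree A > 0" and dB: "degree B > 0" and F: "F = A * B"
  have "\<not> p dvd coeff A 0 \<or> \<not> p dvd coeff B 0"
    using c0 by (auto simp: F coeff_mult_0 power2_eq_square mult_dvd_mono)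
  then show False
  proof
    assume "\<not> p dvd coeff A 0"
    from prime_elem_not_dvd_coeff_mult[OF p _ this dA, of B] show False
      using lc coeffs by (auto simp: F mult.commute[of B A])
  next
    assume "\<not> p dvd coeff B 0"
    from prime_elem_not_dvd_coeff_mult[OF p _ this dB, of A] show False
      using lc coeffs by (auto simp: F)
  qed
qed

lemma irreducible_imp_separable:
  fixes p :: "'a::{field_char_0,factorial_ring_gcd,semiring_gcd_mult_normalize} poly"
  assumes "irreducible p"
  shows "separable p"
  using square_free_imp_separable[OF irreducible\<^sub>d_square_free] assms
  unfolding Defs.separable_def Square_Free_Factorization.separable_def by simp

definition fg_poly :: "'a::comm_ring_1 \<Rightarrow> nat \<Rightarrow> 'a poly" where
  "fg_poly c n = monom 1 n * [:-2, 1:] + [:c:]"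

lemma f_poly_eq_fg_poly: "f_poly n = fg_poly (-2) n"
  by (simp add: f_poly_def fg_poly_def)

lemma g_poly_eq_fg_poly: "g_poly n = fg_poly 2 n"
  by (simp add: g_poly_def fg_poly_def)

lemma poly_fg_poly: "poly (fg_poly c n) z = z ^ n * (z - 2) + c"
  by (simp add: fg_poly_def poly_monom algebra_simps)

lemma coeff_fg_poly:
  assumes "n \<ge> 1"
  shows "coeff (fg_poly c n) i =
    (if i = Suc n then 1 else if i = n then -2 else if i = 0 then c else 0)"
  using assms
  by (cases "i - n") (auto simp: fg_poly_def coeff_monom_mult coeff_pCons split: nat.splits)

lemma degree_fg_poly:
  assumes "n \<ge> 1"
  shows "degree (fg_poly c n) = Suc n"
proof (rule antisym)
  show "degree (fg_poly c n) \<le> Suc n"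
    by (rule degree_le) (use assms in \<open>simp add: coeff_fg_poly\<close>)
  show "Suc n \<le> degree (fg_poly c n)"
    by (rule le_degree) (use assms in \<open>simp add: coeff_fg_poly\<close>)
qed

lemma map_poly_fg_poly:
  assumes "comm_ring_hom h" "n \<ge> 1"
  shows "map_poly h (fg_poly c n) = fg_poly (h c) n"
proof -
  interpret comm_ring_hom h by fact
  show ?thesis
    using assms(2) by (simp add: poly_eq_iff coeff_map_poly coeff_fg_poly hom_distribs)
qed

lemma irreducible\<^sub>d_fg_poly:
  fixes c :: int
  assumes "n \<ge> 1" and "2 dvd c" and "\<not> 4 dvd c"
  shows "irreducible\<^sub>d (fg_poly c n)"
  by (rule eisenstein_irreducible\<^sub>d[where p = 2])
    (use assms in \<open>auto simp: degree_fg_poly coeff_fg_poly\<close>)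

lemma irreducible_fg_poly_rat:
  fixes c :: int
  assumes "n \<ge> 1" and "2 dvd c" and "\<not> 4 dvd c"
  shows "irreducible (fg_poly (rat_of_int c) n)"
  using irreducible\<^sub>d_int_rat[OF irreducible\<^sub>d_fg_poly[OF assms]]
    map_poly_fg_poly[of rat_of_int, OF _ assms(1)]
  by (simp add: of_int_hom.comm_ring_hom_axioms)

theorem lemma8:
  fixes n :: nat
  assumes "n \<ge> 1"
  shows "irreducible (f_poly n) \<and> irreducible (g_poly n)
    \<and> separable (f_poly n) \<and> separable (g_poly n)
    \<and> poly (f_poly n) 0 \<noteq> 0 \<and> poly (g_poly n) 0 \<noteq> 0
    \<and> (\<nexists>z::complex. poly (map_poly of_rat (f_poly n)) z = 0
                     \<and> poly (map_poly of_rat (g_poly n)) z = 0)"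
proof -
  have irr_f: "irreducible (f_poly n)"
    using irreducible_fg_poly_rat[OF assms, of "-2"] by (simp add: f_poly_eq_fg_poly)
  have irr_g: "irreducible (g_poly n)"
    using irreducible_fg_poly_rat[OF assms, of 2] by (simp add: g_poly_eq_fg_poly)
  have "poly (f_poly n) 0 \<noteq> 0" "poly (g_poly n) 0 \<noteq> 0"
    using assms by (simp_all add: f_poly_eq_fg_poly g_poly_eq_fg_poly poly_fg_poly zero_power)
  moreover have "poly (map_poly of_rat (f_poly n)) z = z ^ n * (z - 2) - 2"
    "poly (map_poly of_rat (g_poly n)) z = z ^ n * (z - 2) + 2" for z :: complex
    using map_poly_fg_poly[of "of_rat :: rat \<Rightarrow> complex", OF _ assms]
    by (simp_all add: f_poly_eq_fg_poly g_poly_eq_fg_poly poly_fg_poly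
        of_rat_hom.comm_ring_hom_axioms)
  ultimately show ?thesis
    using irr_f irr_g irreducible_imp_separable by auto
qed
end
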